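(* Let $P(\lambda)=\begin{bmatrix} A(\lambda) & B(\lambda)\\ -C(\lambda) & D(\lambda)\end{bmatrix}$ be a polynomial system matrix of a rational matrix $G(\lambda)$, where $A(\lambda)$ and $C(\lambda)$ are right coprime. Let $H_2(\lambda)$ be a right polynomial basis of $G(\lambda)$ and $H_1(\lambda)=-A(\lambda)^{-1}B(\lambda)H_2(\lambda)$. Then $H_1(\lambda)$ is polynomial and $\begin{bmatrix}H_1(\lambda)\\H_2(\lambda)\end{bmatrix}$ is a right polynomial basis of $P(\lambda)$.
   Context: $\mathbb F$ is an arbitrary field. A polynomial system matrix of $G(\lambda)\in\mathbb F(\lambda)^{p\times m}$ is $P(\lambda)=\begin{bmatrix} A(\lambda) & B(\lambda)\\ -C(\lambda) & D(\lambda)\end{bmatrix}$ with $A\in\mathbb F[\lambda]^{n\times n}$ regular, $B,C,D$ polynomial of compatible sizes, and $G=D+CA^{-1}B$. $A\in\mathbb F[\lambda]^{n\times n}$ and $C\in\mathbb F[\lambda]^{p\times n}$ are right coprime if all their common right divisors are unimodular (equivalently, there exist polynomial $X,Y$ with $XA+YC=I_n$). A right polynomial basis of a rational matrix $G$ is a polynomial matrix whose columns form a basis of $\mathcal N_r(G)=\{x\in\mathbb F(\lambda)^m: Gx=0\}$. *)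

theory Defs
  imports "HOL-Computational_Algebra.Fraction_Field" "HOL-Computational_Algebra.Polynomial"
    "Jordan_Normal_Form.Matrix" "Jordan_Normal_Form.Determinant"
begin

text \<open>Rational functions over a field are represented as the fraction field
  of the polynomial ring; a polynomial matrix is viewed as a rational matrix
  by entrywise embedding.\<close>

type_synonym 'a ratfun = "'a poly fract"

definition rat_of_pmat :: "'a::field poly mat \<Rightarrow> 'a ratfun mat" where
  "rat_of_pmat M = map_mat to_fract M"

definition is_poly_mat :: "'a::field ratfun mat \<Rightarrow> bool" where
  "is_poly_mat M \<longleftrightarrow> (\<exists>K. rat_of_pmat K = M)"

definition right_null_space :: "'a::field ratfun mat \<Rightarrow> 'a ratfun vec set" where
  "right_null_space G = {x \<in> carrier_vec (dim_col G). G *\<^sub>v x = 0\<^sub>v (dim_row G)}"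

definition columns_basis_of :: "'a::field mat \<Rightarrow> 'a vec set \<Rightarrow> bool" where
  "columns_basis_of H V \<longleftrightarrow>
     (\<forall>j < dim_col H. col H j \<in> V) \<and>
     (\<forall>c \<in> carrier_vec (dim_col H). H *\<^sub>v c = 0\<^sub>v (dim_row H) \<longrightarrow> c = 0\<^sub>v (dim_col H)) \<and>
     (\<forall>x \<in> V. \<exists>c \<in> carrier_vec (dim_col H). x = H *\<^sub>v c)"

definition right_poly_basis :: "'a::field poly mat \<Rightarrow> 'a ratfun mat \<Rightarrow> bool" where
  "right_poly_basis H G \<longleftrightarrow> dim_row H = dim_col G \<and>
     columns_basis_of (rat_of_pmat H) (right_null_space G)"

text \<open>Right coprimeness of A (n x n) and C (p x n): Bezout characterisation
  X A + Y C = I_n with polynomial X, Y.\<close>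
definition right_coprime :: "'a::field poly mat \<Rightarrow> 'a poly mat \<Rightarrow> bool" where
  "right_coprime A C \<longleftrightarrow>
     (\<exists>X Y. X \<in> carrier_mat (dim_col A) (dim_row A) \<and> Y \<in> carrier_mat (dim_col A) (dim_row C) \<and>
            X * A + Y * C = 1\<^sub>m (dim_col A))"

end

theory Submission
  imports Defs
begin

text \<open>A Bezout identity \<open>X A + Y C = I\<close> gives \<open>A\<^sup>-\<^sup>1 = X + Y C A\<^sup>-\<^sup>1\<close>; since \<open>G H\<^sub>2 = 0\<close>
  says \<open>C A\<^sup>-\<^sup>1 B H\<^sub>2 = - D H\<^sub>2\<close>, this yields \<open>- A\<^sup>-\<^sup>1 B H\<^sub>2 = Y D H\<^sub>2 - X B H\<^sub>2\<close>, a polynomial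
  matrix. For the basis property: \<open>(u, w)\<close> lies in the right null space of \<open>P\<close> exactly when
  \<open>u = - A\<^sup>-\<^sup>1 B w\<close> and \<open>G w = 0\<close>, so \<open>w \<mapsto> (- A\<^sup>-\<^sup>1 B w, w)\<close> is an isomorphism from the
  null space of \<open>G\<close> onto that of \<open>P\<close>, and it carries the basis \<open>H\<^sub>2\<close> to \<open>[H\<^sub>1; H\<^sub>2]\<close>.\<close>

lemma rat_of_pmat_dims [simp]:
  "dim_row (rat_of_pmat A) = dim_row A" "dim_col (rat_of_pmat A) = dim_col A"
  "rat_of_pmat A \<in> carrier_mat nr nc \<longleftrightarrow> A \<in> carrier_mat nr nc"
  unfolding rat_of_pmat_def carrier_mat_def by auto

lemma rat_of_pmat_mult:
  assumes "A \<in> carrier_mat nr n" and "B \<in> carrier_mat n nc"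
  shows "rat_of_pmat (A * B) = rat_of_pmat A * rat_of_pmat B"
proof -
  interpret inj_comm_ring_hom "to_fract :: 'a::field poly \<Rightarrow> _" by unfold_locales auto
  show ?thesis unfolding rat_of_pmat_def by (rule mat_hom_mult[OF assms])
qed

lemma rat_of_pmat_add:
  "A \<in> carrier_mat nr nc \<Longrightarrow> B \<in> carrier_mat nr nc \<Longrightarrow>
    rat_of_pmat (A + B) = rat_of_pmat A + rat_of_pmat B"
  unfolding rat_of_pmat_def by (rule eq_matI) auto

lemma rat_of_pmat_minus:
  "A \<in> carrier_mat nr nc \<Longrightarrow> B \<in> carrier_mat nr nc \<Longrightarrow>
    rat_of_pmat (A - B) = rat_of_pmat A - rat_of_pmat B"
  unfolding rat_of_pmat_def by (rule eq_matI) auto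

lemma rat_of_pmat_uminus: "rat_of_pmat (- A) = - rat_of_pmat A"
  unfolding rat_of_pmat_def by (rule eq_matI) auto

lemma rat_of_pmat_one: "rat_of_pmat (1\<^sub>m n) = 1\<^sub>m n"
  unfolding rat_of_pmat_def by (rule eq_matI) auto

lemma rat_of_pmat_append_rows:
  "A \<in> carrier_mat nr1 nc \<Longrightarrow> B \<in> carrier_mat nr2 nc \<Longrightarrow>
    rat_of_pmat (A @\<^sub>r B) = rat_of_pmat A @\<^sub>r rat_of_pmat B"
  unfolding rat_of_pmat_def append_rows_def by (subst map_four_block_mat[of _ nr1 nc _ 0 _ nr2]) auto

lemma rat_of_pmat_four_block_mat:
  "A \<in> carrier_mat nr1 nc1 \<Longrightarrow> B \<in> carrier_mat nr1 nc2 \<Longrightarrow>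
    C \<in> carrier_mat nr2 nc1 \<Longrightarrow> D \<in> carrier_mat nr2 nc2 \<Longrightarrow>
    rat_of_pmat (four_block_mat A B C D) =
      four_block_mat (rat_of_pmat A) (rat_of_pmat B) (rat_of_pmat C) (rat_of_pmat D)"
  unfolding rat_of_pmat_def by (rule map_four_block_mat)

lemma col_eq_mult_unit_vec:
  fixes A :: "'a::semiring_1 mat"
  assumes "A \<in> carrier_mat nr nc" and "j < nc"
  shows "col A j = A *\<^sub>v unit_vec nc j"
proof -
  have "col (A * 1\<^sub>m nc) j = A *\<^sub>v col (1\<^sub>m nc) j"
    by (rule col_mult2[OF assms(1) one_carrier_mat assms(2)])
  then show ?thesis by (simp only: right_mult_one_mat[OF assms(1)] col_one[OF assms(2)])
qed

lemma mult_eq_zero_mat_if_cols: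
  assumes G: "G \<in> carrier_mat p m" and H: "H \<in> carrier_mat m k"
    and cols: "\<And>j. j < k \<Longrightarrow> G *\<^sub>v col H j = 0\<^sub>v p"
  shows "G * H = 0\<^sub>m p k"
  by (rule mat_col_eqI) (use G H cols in \<open>auto simp flip: col_mult2\<close>)

lemma mult_mat_vec_uminus:
  fixes A :: "'a::ring mat"
  assumes "A \<in> carrier_mat nr nc" and "v \<in> carrier_vec nc"
  shows "A *\<^sub>v (- v) = - (A *\<^sub>v v)"
  by (rule eq_vecI) (use assms in \<open>auto simp: scalar_prod_def sum_negf\<close>)

lemma system_matrix_mult_vec_eq_0_iff:
  fixes a b c d Ainv :: "'b::comm_ring_1 mat"
  assumes a: "a \<in> carrier_mat n n" and b: "b \<in> carrier_mat n m"
    and c: "c \<in> carrier_mat p n" and d: "d \<in> carrier_mat p m"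
    and Ainv: "Ainv \<in> carrier_mat n n" "Ainv * a = 1\<^sub>m n" "a * Ainv = 1\<^sub>m n"
    and u: "u \<in> carrier_vec n" and w: "w \<in> carrier_vec m"
  shows "four_block_mat a b (- c) d *\<^sub>v (u @\<^sub>v w) = 0\<^sub>v (n + p) \<longleftrightarrow>
    u = - (Ainv *\<^sub>v (b *\<^sub>v w)) \<and> (d + c * Ainv * b) *\<^sub>v w = 0\<^sub>v p"
proof -
  define v where "v = Ainv *\<^sub>v (b *\<^sub>v w)"
  have v: "v \<in> carrier_vec n" using Ainv b w by (simp add: v_def)
  have top: "a *\<^sub>v u + b *\<^sub>v w = 0\<^sub>v n \<longleftrightarrow> u = - v"
  proof
    assume eq: "a *\<^sub>v u + b *\<^sub>v w = 0\<^sub>v n"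
    have "u = (u + v) + - v" using u v by simp
    also have "u + v = Ainv *\<^sub>v (a *\<^sub>v u + b *\<^sub>v w)"
      using a b u w Ainv by (simp add: mult_add_distrib_mat_vec v_def flip: assoc_mult_mat_vec)
    also have "\<dots> = 0\<^sub>v n" unfolding eq by (rule eq_vecI) (use Ainv in auto)
    finally show "u = - v" using v by simp
  next
    assume "u = - v"
    moreover have "a *\<^sub>v v = b *\<^sub>v w"
      using a b w Ainv by (simp add: v_def flip: assoc_mult_mat_vec[of a n n Ainv n])
    ultimately show "a *\<^sub>v u + b *\<^sub>v w = 0\<^sub>v n"
      using a b w v by (simp add: mult_mat_vec_uminus)
  qed
  have "(d + c * Ainv * b) *\<^sub>v w = d *\<^sub>v w + c *\<^sub>v v"
    using c d b w Ainv
    by (simp add: add_mult_distrib_mat_vec[of _ p m] assoc_mult_mat_vec[of _ p n _ m] v_def)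
  also have "\<dots> = (- c) *\<^sub>v (- v) + d *\<^sub>v w"
    using c d w v by (simp add: mult_mat_vec_uminus comm_add_vec[of _ p])
  finally have bottom: "(- c) *\<^sub>v (- v) + d *\<^sub>v w = (d + c * Ainv * b) *\<^sub>v w" ..
  have block: "four_block_mat a b (- c) d *\<^sub>v (u @\<^sub>v w) = (a *\<^sub>v u + b *\<^sub>v w) @\<^sub>v ((- c) *\<^sub>v u + d *\<^sub>v w)"
    by (rule four_block_mat_mult_vec) (use a b c d u w in auto)
  have zero: "0\<^sub>v (n + p) = 0\<^sub>v n @\<^sub>v 0\<^sub>v p" by auto
  have "four_block_mat a b (- c) d *\<^sub>v (u @\<^sub>v w) = 0\<^sub>v (n + p) \<longleftrightarrow>
      a *\<^sub>v u + b *\<^sub>v w = 0\<^sub>v n \<and> (- c) *\<^sub>v u + d *\<^sub>v w = 0\<^sub>v p"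
    unfolding block zero by (rule append_vec_eq[of _ n]) (use a b u w in auto)
  then show ?thesis unfolding v_def[symmetric] using top bottom by auto
qed

lemma columns_basis_of_system_null_space:
  fixes a b c d Ainv h :: "'b::field mat"
  assumes a: "a \<in> carrier_mat n n" and b: "b \<in> carrier_mat n m"
    and c: "c \<in> carrier_mat p n" and d: "d \<in> carrier_mat p m"
    and Ainv: "Ainv \<in> carrier_mat n n" "Ainv * a = 1\<^sub>m n" "a * Ainv = 1\<^sub>m n"
    and h: "h \<in> carrier_mat m k"
    and basis: "columns_basis_of h {w \<in> carrier_vec m. (d + c * Ainv * b) *\<^sub>v w = 0\<^sub>v p}"
  shows "columns_basis_of (- (Ainv * b * h) @\<^sub>r h)
    {x \<in> carrier_vec (n + m). four_block_mat a b (- c) d *\<^sub>v x = 0\<^sub>v (n + p)}"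
proof -
  define lift where "lift w = - (Ainv *\<^sub>v (b *\<^sub>v w)) @\<^sub>v w" for w
  define M where "M = - (Ainv * b * h) @\<^sub>r h"
  let ?NG = "{w \<in> carrier_vec m. (d + c * Ainv * b) *\<^sub>v w = 0\<^sub>v p}"
  let ?NP = "{x \<in> carrier_vec (n + m). four_block_mat a b (- c) d *\<^sub>v x = 0\<^sub>v (n + p)}"
  have M: "M \<in> carrier_mat (n + m) k" using Ainv b h by (simp add: M_def)
  have lift_carrier: "lift w \<in> carrier_vec (n + m)" if "w \<in> carrier_vec m" for w
    using that Ainv b by (simp add: lift_def)
  have M_mult: "M *\<^sub>v v = lift (h *\<^sub>v v)" if v: "v \<in> carrier_vec k" for v
    using Ainv b h v
    by (simp add: M_def lift_def mat_mult_append[of _ n k _ m]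
        assoc_mult_mat_vec[of Ainv n n "b * h" k] assoc_mult_mat_vec[of b n m h k])
  have lift_in_NP: "lift w \<in> ?NP \<longleftrightarrow> w \<in> ?NG" if w: "w \<in> carrier_vec m" for w
    using system_matrix_mult_vec_eq_0_iff[OF a b c d Ainv _ w] lift_carrier[OF w] w Ainv b
    by (simp add: lift_def)
  have NP_lift: "x = lift (vec_last x m)" if x: "x \<in> ?NP" for x
  proof -
    have split: "x = vec_first x n @\<^sub>v vec_last x m" using x by simp
    then have "vec_first x n = - (Ainv *\<^sub>v (b *\<^sub>v vec_last x m))"
      using x system_matrix_mult_vec_eq_0_iff[OF a b c d Ainv vec_first_carrier vec_last_carrier,
          of x x] by simp
    then show ?thesis using split by (simp add: lift_def)
  qed
  have cols: "col M j \<in> ?NP" if j: "j < dim_col M" for j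
  proof -
    have j: "j < k" using j M by simp
    have "col M j = lift (col h j)"
      using M_mult col_eq_mult_unit_vec[OF M j] col_eq_mult_unit_vec[OF h j] by simp
    moreover have "col h j \<in> ?NG" using basis h j unfolding columns_basis_of_def by auto
    ultimately show ?thesis using lift_in_NP h j by simp
  qed
  have indep: "v = 0\<^sub>v (dim_col M)" if v: "v \<in> carrier_vec (dim_col M)" and "M *\<^sub>v v = 0\<^sub>v (dim_row M)" for v
  proof -
    have v: "v \<in> carrier_vec k" using v M by simp
    have "lift (h *\<^sub>v v) = 0\<^sub>v n @\<^sub>v 0\<^sub>v m" using that M M_mult[OF v] by auto
    then have "h *\<^sub>v v = 0\<^sub>v m"
      unfolding lift_def by (subst (asm) append_vec_eq[of _ n]) (use Ainv b h v in auto)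
    then show ?thesis using basis h v M unfolding columns_basis_of_def by auto
  qed
  have span: "\<exists>v \<in> carrier_vec (dim_col M). x = M *\<^sub>v v" if x: "x \<in> ?NP" for x
  proof -
    have "vec_last x m \<in> ?NG" using lift_in_NP[of "vec_last x m"] NP_lift x by simp
    then obtain v where v: "v \<in> carrier_vec k" and "vec_last x m = h *\<^sub>v v"
      using basis h vec_last_carrier unfolding columns_basis_of_def by blast
    then have "x = M *\<^sub>v v" using NP_lift[OF x] M_mult[OF v] by simp
    then show ?thesis using v M by auto
  qed
  show ?thesis unfolding M_def[symmetric] columns_basis_of_def using cols indep span by blast
qed

lemma uminus_inverse_mult_eq_of_bezout:
  fixes a b c d x y Ainv h :: "'b::comm_ring_1 mat"
  assumes a: "a \<in> carrier_mat n n" and b: "b \<in> carrier_mat n m"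
    and c: "c \<in> carrier_mat p n" and d: "d \<in> carrier_mat p m"
    and x: "x \<in> carrier_mat n n" and y: "y \<in> carrier_mat n p"
    and Ainv: "Ainv \<in> carrier_mat n n" and h: "h \<in> carrier_mat m k"
    and bezout: "x * a + y * c = 1\<^sub>m n" and inverse: "a * Ainv = 1\<^sub>m n"
    and null: "(d + c * Ainv * b) * h = 0\<^sub>m p k"
  shows "- (Ainv * b * h) = y * (d * h) - x * (b * h)"
proof -
  have Ainv_eq: "Ainv = x + y * (c * Ainv)"
  proof -
    have "Ainv = (x * a + y * c) * Ainv" using Ainv by (simp add: bezout)
    also have "\<dots> = x * (a * Ainv) + y * (c * Ainv)"
      using a c x y Ainv by (simp add: add_mult_distrib_mat[of _ n n])
    finally show ?thesis using x by (simp add: inverse)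
  qed
  have dh: "d * h \<in> carrier_mat p k" and bh: "b * h \<in> carrier_mat n k"
    and cAbh: "c * (Ainv * (b * h)) \<in> carrier_mat p k" using b c d Ainv h by auto
  have sum_zero: "d * h + c * (Ainv * (b * h)) = 0\<^sub>m p k"
    using null b c d Ainv h
    by (simp add: add_mult_distrib_mat[of _ p m] assoc_mult_mat[of c p n "Ainv * b" m h k]
        assoc_mult_mat[of Ainv n n b m h k])
  have "c * (Ainv * (b * h)) = (- (d * h) + d * h) + c * (Ainv * (b * h))"
    using dh cAbh by simp
  also have "\<dots> = - (d * h)" using dh cAbh by (simp add: sum_zero del: uminus_l_inv_mat)
  finally have c_Ainv_bh: "c * (Ainv * (b * h)) = - (d * h)" .
  have "Ainv * (b * h) = (x + y * (c * Ainv)) * (b * h)" by (subst Ainv_eq) rule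
  also have "\<dots> = x * (b * h) + y * (c * (Ainv * (b * h)))"
    using bh c x y Ainv
    by (simp add: add_mult_distrib_mat[of _ n n] assoc_mult_mat[of y n p "c * Ainv" n "b * h" k]
        assoc_mult_mat[of c p n Ainv n "b * h" k])
  also have "y * (c * (Ainv * (b * h))) = - (y * (d * h))"
    unfolding c_Ainv_bh by (rule uminus_mult_right_mat) (use y dh in auto)
  finally have "Ainv * (b * h) = x * (b * h) + - (y * (d * h))" .
  then show ?thesis
    using b h Ainv bh dh x y by (intro eq_matI) auto
qed

lemma right_poly_basis_mult_eq_zero:
  assumes G: "G \<in> carrier_mat p m" and H: "H \<in> carrier_mat m k"
    and basis: "right_poly_basis H G"
  shows "G * rat_of_pmat H = 0\<^sub>m p k"
  by (rule mult_eq_zero_mat_if_cols[OF G])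
    (use H basis G in \<open>auto simp: right_poly_basis_def columns_basis_of_def right_null_space_def\<close>)

lemma is_poly_mat_uminus_inverse_mult:
  fixes A B C D H :: "'a::field poly mat" and Ainv :: "'a ratfun mat"
  assumes A: "A \<in> carrier_mat n n" and B: "B \<in> carrier_mat n m"
    and C: "C \<in> carrier_mat p n" and D: "D \<in> carrier_mat p m" and H: "H \<in> carrier_mat m k"
    and Ainv: "Ainv \<in> carrier_mat n n" "rat_of_pmat A * Ainv = 1\<^sub>m n"
    and coprime: "right_coprime A C"
    and null: "(rat_of_pmat D + rat_of_pmat C * Ainv * rat_of_pmat B) * rat_of_pmat H = 0\<^sub>m p k"
  shows "is_poly_mat (- (Ainv * rat_of_pmat B * rat_of_pmat H))"
proof -
  obtain X Y where X: "X \<in> carrier_mat n n" and Y: "Y \<in> carrier_mat n p"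
    and bezout: "X * A + Y * C = 1\<^sub>m n"
    using coprime A C unfolding right_coprime_def by auto
  have "rat_of_pmat X * rat_of_pmat A + rat_of_pmat Y * rat_of_pmat C = 1\<^sub>m n"
    using arg_cong[OF bezout, of rat_of_pmat] X Y A C
    by (simp add: rat_of_pmat_add[of _ n n] rat_of_pmat_mult[of _ n n] rat_of_pmat_mult[of _ n p]
        rat_of_pmat_one)
  then have "- (Ainv * rat_of_pmat B * rat_of_pmat H) = rat_of_pmat (Y * (D * H) - X * (B * H))"
    using uminus_inverse_mult_eq_of_bezout[of "rat_of_pmat A" n "rat_of_pmat B" m "rat_of_pmat C" p
        "rat_of_pmat D" "rat_of_pmat X" "rat_of_pmat Y" Ainv "rat_of_pmat H" k]
      A B C D X Y H Ainv null
    by (simp add: rat_of_pmat_minus[of _ n k] rat_of_pmat_mult[OF Y mult_carrier_mat[OF D H]]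
        rat_of_pmat_mult[OF X mult_carrier_mat[OF B H]] rat_of_pmat_mult[OF D H]
        rat_of_pmat_mult[OF B H])
  then show ?thesis unfolding is_poly_mat_def by metis
qed

lemma right_poly_basis_system_matrix:
  fixes A B C D H1 H2 :: "'a::field poly mat" and Ainv :: "'a ratfun mat"
  assumes A: "A \<in> carrier_mat n n" and B: "B \<in> carrier_mat n m"
    and C: "C \<in> carrier_mat p n" and D: "D \<in> carrier_mat p m" and H2: "H2 \<in> carrier_mat m k"
    and Ainv: "Ainv \<in> carrier_mat n n"
      "Ainv * rat_of_pmat A = 1\<^sub>m n" "rat_of_pmat A * Ainv = 1\<^sub>m n"
    and basis: "right_poly_basis H2 (rat_of_pmat D + rat_of_pmat C * Ainv * rat_of_pmat B)"
    and H1: "rat_of_pmat H1 = - (Ainv * rat_of_pmat B * rat_of_pmat H2)"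
  shows "right_poly_basis (H1 @\<^sub>r H2) (rat_of_pmat (four_block_mat A B (- C) D))"
proof -
  let ?P = "four_block_mat (rat_of_pmat A) (rat_of_pmat B) (- rat_of_pmat C) (rat_of_pmat D)"
  have "rat_of_pmat H1 \<in> carrier_mat n k" unfolding H1 using Ainv B H2 by simp
  then have H1_carrier: "H1 \<in> carrier_mat n k" by simp
  have "rat_of_pmat (H1 @\<^sub>r H2) = - (Ainv * rat_of_pmat B * rat_of_pmat H2) @\<^sub>r rat_of_pmat H2"
    using H1 rat_of_pmat_append_rows[OF H1_carrier H2] by simp
  moreover have "rat_of_pmat (four_block_mat A B (- C) D) = ?P"
    using A B C D by (simp add: rat_of_pmat_four_block_mat[of _ n n _ m _ p] rat_of_pmat_uminus)
  moreover have "columns_basis_of (- (Ainv * rat_of_pmat B * rat_of_pmat H2) @\<^sub>r rat_of_pmat H2)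
      {x \<in> carrier_vec (n + m). ?P *\<^sub>v x = 0\<^sub>v (n + p)}"
    by (rule columns_basis_of_system_null_space)
      (use A B C D Ainv H2 basis in \<open>auto simp: right_poly_basis_def right_null_space_def\<close>)
  moreover have "H1 @\<^sub>r H2 \<in> carrier_mat (n + m) k"
    using H1_carrier H2 by (rule carrier_append_rows)
  moreover have "?P \<in> carrier_mat (n + p) (n + m)" using A B C D by auto
  ultimately show ?thesis
    using A D unfolding right_poly_basis_def right_null_space_def by auto
qed

theorem lemma3p7:
  fixes A B C D :: "'a::field poly mat" and Ainv G :: "'a ratfun mat"
    and H2 :: "'a poly mat" and n m p :: nat
  assumes A: "A \<in> carrier_mat n n" and B: "B \<in> carrier_mat n m"
    and C: "C \<in> carrier_mat p n" and D: "D \<in> carrier_mat p m"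
    and regular: "det A \<noteq> 0"
    and Ainv: "Ainv \<in> carrier_mat n n"
      "Ainv * rat_of_pmat A = 1\<^sub>m n" "rat_of_pmat A * Ainv = 1\<^sub>m n"
    and G: "G = rat_of_pmat D + rat_of_pmat C * Ainv * rat_of_pmat B"
    and coprime: "right_coprime A C"
    and H2: "right_poly_basis H2 G"
  shows "is_poly_mat (- (Ainv * rat_of_pmat B * rat_of_pmat H2)) \<and>
    (\<forall>H1. rat_of_pmat H1 = - (Ainv * rat_of_pmat B * rat_of_pmat H2) \<longrightarrow>
       right_poly_basis (H1 @\<^sub>r H2) (rat_of_pmat (four_block_mat A B (- C) D)))"
proof -
  have G_carrier: "G \<in> carrier_mat p m" using A B C D Ainv by (simp add: G)
  obtain k where H2_carrier: "H2 \<in> carrier_mat m k"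
    using H2 G_carrier unfolding right_poly_basis_def carrier_mat_def by simp
  have "G * rat_of_pmat H2 = 0\<^sub>m p k"
    by (rule right_poly_basis_mult_eq_zero[OF G_carrier H2_carrier H2])
  then have "is_poly_mat (- (Ainv * rat_of_pmat B * rat_of_pmat H2))"
    by (intro is_poly_mat_uminus_inverse_mult[OF A B C D H2_carrier Ainv(1,3) coprime])
      (simp add: G)
  moreover have "right_poly_basis (H1 @\<^sub>r H2) (rat_of_pmat (four_block_mat A B (- C) D))"
    if "rat_of_pmat H1 = - (Ainv * rat_of_pmat B * rat_of_pmat H2)" for H1
    using right_poly_basis_system_matrix[OF A B C D H2_carrier Ainv] H2 that by (simp add: G)
  ultimately show ?thesis by blast
qed

end
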